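(* Suppose $k$ is a finite field with the trivial absolute value or a local field, and let $X$ be a topological space. For every maximal ideal $m$ of $C_{bd}(X,k)$ the quotient $C_{bd}(X,k)/m$ is $k$, and denoting by $f(m)\in k$ the image of $f$, one has $C_{bd}(X,k)=k\oplus m$ orthogonally and $$\|f\|=\sup_{m\in\mathrm{Max}(C_{bd}(X,k))}|f(m)|\quad\text{for all } f\in C_{bd}(X,k).$$
   Context: A local field means a complete discretely valued field with finite residue field. $C_{bd}(X,k)$ is the $k$-algebra of bounded continuous functions $X\to k$ with the supremum norm $\|f\|=\sup_{x\in X}|f(x)|$; $\mathrm{Max}$ denotes the set of maximal ideals. Orthogonal means $\|a+g\|=\max\{|a|,\|g\|\}$ for $a\in k$, $g\in m$. *)

theory Defs
  imports "HOL-Analysis.Analysis" "HOL-Algebra.QuotRing"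
begin

definition is_absval :: "('k::field \<Rightarrow> real) \<Rightarrow> bool" where
  "is_absval v \<longleftrightarrow> (\<forall>x. 0 \<le> v x) \<and> (\<forall>x. v x = 0 \<longleftrightarrow> x = 0) \<and>
     (\<forall>x y. v (x * y) = v x * v y) \<and> (\<forall>x y. v (x + y) \<le> v x + v y)"

definition trivial_absval :: "('k::field \<Rightarrow> real) \<Rightarrow> bool" where
  "trivial_absval v \<longleftrightarrow> (\<forall>x. v x = (if x = 0 then 0 else 1))"

text \<open>Complete discretely valued field with finite residue field.\<close>
definition local_field :: "('k::field \<Rightarrow> real) \<Rightarrow> bool" where
  "local_field v \<longleftrightarrow> is_absval v
     \<and> (\<forall>x y. v (x + y) \<le> max (v x) (v y))
     \<and> (\<exists>\<pi>. 0 < v \<pi> \<and> v \<pi> < 1 \<and> (\<forall>x. x \<noteq> 0 \<longrightarrow> (\<exists>n::int. v x = v \<pi> powi n)))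
     \<and> (\<forall>s::nat \<Rightarrow> 'k. (\<forall>e>0. \<exists>N. \<forall>m\<ge>N. \<forall>n\<ge>N. v (s m - s n) < e)
           \<longrightarrow> (\<exists>l. \<forall>e>0. \<exists>N. \<forall>n\<ge>N. v (s n - l) < e))
     \<and> finite ({x. v x \<le> 1} // {(x, y). v x \<le> 1 \<and> v y \<le> 1 \<and> v (x - y) < 1})"

definition absval_topology :: "('k::field \<Rightarrow> real) \<Rightarrow> 'k topology" where
  "absval_topology v = topology (\<lambda>U. \<forall>x\<in>U. \<exists>e>0. \<forall>y. v (y - x) < e \<longrightarrow> y \<in> U)"

text \<open>Bounded continuous functions X \<rightarrow> k (extended by 0 outside topspace X).\<close>
definition Cbd_set :: "'x topology \<Rightarrow> ('k::field \<Rightarrow> real) \<Rightarrow> ('x \<Rightarrow> 'k) set" where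
  "Cbd_set X v = {f. continuous_map X (absval_topology v) f
      \<and> (\<exists>B. \<forall>x\<in>topspace X. v (f x) \<le> B)
      \<and> (\<forall>x. x \<notin> topspace X \<longrightarrow> f x = 0)}"

definition cst :: "'x topology \<Rightarrow> 'k::field \<Rightarrow> 'x \<Rightarrow> 'k" where
  "cst X a = (\<lambda>x. if x \<in> topspace X then a else 0)"

definition Cbd :: "'x topology \<Rightarrow> ('k::field \<Rightarrow> real) \<Rightarrow> ('x \<Rightarrow> 'k) ring" where
  "Cbd X v = \<lparr>carrier = Cbd_set X v,
      mult = (\<lambda>f g x. f x * g x), one = cst X 1,
      zero = (\<lambda>x. 0), add = (\<lambda>f g x. f x + g x)\<rparr>"

definition sup0 :: "real set \<Rightarrow> real" where
  "sup0 S = (if S = {} then 0 else Sup S)"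

definition sup_norm :: "'x topology \<Rightarrow> ('k::field \<Rightarrow> real) \<Rightarrow> ('x \<Rightarrow> 'k) \<Rightarrow> real" where
  "sup_norm X v f = sup0 ((\<lambda>x. v (f x)) ` topspace X)"

text \<open>The image f(m) \<in> k of f in C_bd(X,k)/m \<cong> k.\<close>
definition eval_max :: "'x topology \<Rightarrow> ('k::field \<Rightarrow> real) \<Rightarrow> ('x \<Rightarrow> 'k) set \<Rightarrow> ('x \<Rightarrow> 'k) \<Rightarrow> 'k" where
  "eval_max X v m f = (THE a. m +>\<^bsub>Cbd X v\<^esub> cst X a = m +>\<^bsub>Cbd X v\<^esub> f)"

end

theory Submission
  imports Defs
begin

text \<open>
  Because \<open>k\<close> is non-archimedean, preimages of balls under
  \<open>f \<in> C_bd(X,k)\<close> are clopen, and the clopen sets whose indicator is not in \<open>m\<close> behave like an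
  ultrafilter. If \<open>f - b\<close> is invertible modulo \<open>m\<close>, say \<open>g (f - b) \<equiv> 1\<close>, then \<open>1 - g (f - b)\<close> is a
  unit on \<open>{|f - b| < 1/\<parallel>g\<parallel>}\<close>, forcing that set out of the ultrafilter. Since bounded subsets of
  \<open>k\<close> are totally bounded, some ball of every radius has large preimage; the centres form a Cauchy
  sequence whose limit \<open>a\<close> has all preimages large, so \<open>f \<equiv> a\<close> modulo \<open>m\<close>: the residue field is
  \<open>k\<close>. Orthogonality follows from the ultrametric inequality, since \<open>g \<in> m\<close> cannot satisfy
  \<open>|g| \<ge> |a| > 0\<close> everywhere. The norm formula combines orthogonality (\<open>|f(m)| \<le> \<parallel>f\<parallel>\<close>) with
  the maximal ideals of functions vanishing at a point.
\<close>

section \<open>Absolute values\<close>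

lemma absval_0: "is_absval v \<Longrightarrow> v 0 = 0" by (simp add: is_absval_def)
lemma absval_nonneg: "is_absval v \<Longrightarrow> 0 \<le> v x" by (simp add: is_absval_def)
lemma absval_eq_0_iff: "is_absval v \<Longrightarrow> v x = 0 \<longleftrightarrow> x = 0" by (simp add: is_absval_def)
lemma absval_mult: "is_absval v \<Longrightarrow> v (x * y) = v x * v y" by (simp add: is_absval_def)
lemma absval_triangle: "is_absval v \<Longrightarrow> v (x + y) \<le> v x + v y" by (simp add: is_absval_def)

lemma absval_pos: "is_absval v \<Longrightarrow> x \<noteq> 0 \<Longrightarrow> 0 < v x"
  using absval_nonneg[of v x] absval_eq_0_iff[of v x] by linarith

lemma absval_1: assumes "is_absval v" shows "v 1 = 1"
proof -
  have "v 1 = v 1 * v 1" using absval_mult[OF assms, of 1 1] by simp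
  moreover have "v 1 \<noteq> 0" using absval_eq_0_iff[OF assms, of 1] by simp
  ultimately show ?thesis by (metis mult_cancel_left1)
qed

lemma absval_uminus: assumes "is_absval v" shows "v (- x) = v x"
proof -
  have "v (-1) * v (-1) = 1" using absval_mult[OF assms, of "-1" "-1"] absval_1[OF assms] by simp
  then have "v (-1) = 1" using absval_nonneg[OF assms, of "-1"]
    by (smt (verit) mult_le_one mult_less_cancel_left1)
  then show ?thesis using absval_mult[OF assms, of "-1" x] by simp
qed

lemma absval_minus_commute: "is_absval v \<Longrightarrow> v (x - y) = v (y - x)"
  using absval_uminus[of v "x - y"] by simp

lemma absval_inverse: assumes "is_absval v" shows "v (inverse x) = inverse (v x)"
proof (cases "x = 0")
  case True then show ?thesis using absval_0[OF assms] by simp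
next
  case False
  then have "v (inverse x) * v x = 1"
    using absval_mult[OF assms, of "inverse x" x] absval_1[OF assms] by simp
  moreover have "v x \<noteq> 0" using absval_eq_0_iff[OF assms, of x] False by simp
  ultimately show ?thesis by (simp add: field_simps)
qed

lemma absval_power: "is_absval v \<Longrightarrow> v (x ^ n) = v x ^ n"
  by (induction n) (simp_all add: absval_1 absval_mult)

lemma absval_diff_triangle: "is_absval v \<Longrightarrow> v (x - z) \<le> v (x - y) + v (y - z)"
  using absval_triangle[of v "x - y" "y - z"] by simp

definition nonarchimedean :: "('k::field \<Rightarrow> real) \<Rightarrow> bool" where
  "nonarchimedean v \<longleftrightarrow> (\<forall>x y. v (x + y) \<le> max (v x) (v y))"

lemma nonarchimedeanD: "nonarchimedean v \<Longrightarrow> v (x + y) \<le> max (v x) (v y)"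
  by (simp add: nonarchimedean_def)

lemma nonarchimedean_diff: "nonarchimedean v \<Longrightarrow> v (x - z) \<le> max (v (x - y)) (v (y - z))"
  using nonarchimedeanD[of v "x - y" "y - z"] by simp

lemma nonarchimedean_add_eq_left:
  assumes "is_absval v" "nonarchimedean v" "v y < v x"
  shows "v (x + y) = v x"
proof -
  have "v x \<le> max (v (x + y)) (v (- y))"
    using nonarchimedeanD[OF assms(2), of "x + y" "- y"] by simp
  then have "v x \<le> v (x + y)" using assms by (auto simp: absval_uminus)
  moreover have "v (x + y) \<le> v x" using nonarchimedeanD[OF assms(2), of x y] assms(3) by simp
  ultimately show ?thesis by simp
qed

lemma nonarchimedean_one_minus:
  assumes "is_absval v" "nonarchimedean v" "v u < 1" shows "v (1 - u) = 1"
  using nonarchimedean_add_eq_left[OF assms(1,2), of "- u" 1] assms(3)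
  by (simp add: absval_uminus[OF assms(1)] absval_1[OF assms(1)])

definition absval_complete :: "('k::field \<Rightarrow> real) \<Rightarrow> bool" where
  "absval_complete v \<longleftrightarrow> (\<forall>s::nat \<Rightarrow> 'k. (\<forall>e>0. \<exists>N. \<forall>m\<ge>N. \<forall>n\<ge>N. v (s m - s n) < e)
      \<longrightarrow> (\<exists>l. \<forall>e>0. \<exists>N. \<forall>n\<ge>N. v (s n - l) < e))"

definition bounded_totally_bounded :: "('k::field \<Rightarrow> real) \<Rightarrow> bool" where
  "bounded_totally_bounded v \<longleftrightarrow>
     (\<forall>M r. 0 < r \<longrightarrow> (\<exists>F. finite F \<and> (\<forall>y. v y \<le> M \<longrightarrow> (\<exists>b\<in>F. v (y - b) < r))))"

section \<open>The topology of an absolute value\<close>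

lemma istopology_absval:
  "istopology (\<lambda>U. \<forall>x\<in>U. \<exists>e>0. \<forall>y. (v::'k::field \<Rightarrow> real) (y - x) < e \<longrightarrow> y \<in> U)"
  unfolding istopology_def
proof (intro conjI allI impI)
  fix S T :: "'k set"
  assume S: "\<forall>x\<in>S. \<exists>e>0. \<forall>y. v (y - x) < e \<longrightarrow> y \<in> S"
     and T: "\<forall>x\<in>T. \<exists>e>0. \<forall>y. v (y - x) < e \<longrightarrow> y \<in> T"
  show "\<forall>x\<in>S \<inter> T. \<exists>e>0. \<forall>y. v (y - x) < e \<longrightarrow> y \<in> S \<inter> T"
  proof
    fix x assume x: "x \<in> S \<inter> T"
    obtain e1 where "e1 > 0" "\<forall>y. v (y - x) < e1 \<longrightarrow> y \<in> S" using S x by auto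
    moreover obtain e2 where "e2 > 0" "\<forall>y. v (y - x) < e2 \<longrightarrow> y \<in> T" using T x by auto
    ultimately show "\<exists>e>0. \<forall>y. v (y - x) < e \<longrightarrow> y \<in> S \<inter> T"
      by (intro exI[of _ "min e1 e2"]) auto
  qed
next
  fix K :: "'k set set"
  assume "\<forall>U\<in>K. \<forall>x\<in>U. \<exists>e>0. \<forall>y. v (y - x) < e \<longrightarrow> y \<in> U"
  then show "\<forall>x\<in>\<Union>K. \<exists>e>0. \<forall>y. v (y - x) < e \<longrightarrow> y \<in> \<Union>K"
    by (meson UnionE UnionI)
qed

lemma openin_absval_topology:
  "openin (absval_topology v) U \<longleftrightarrow> (\<forall>x\<in>U. \<exists>e>0. \<forall>y. v (y - x) < e \<longrightarrow> y \<in> U)"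
  unfolding absval_topology_def using istopology_absval[of v] by simp

lemma topspace_absval_topology: "topspace (absval_topology v) = UNIV"
proof -
  have "openin (absval_topology v) UNIV"
    unfolding openin_absval_topology by (meson UNIV_I zero_less_one)
  then show ?thesis using openin_subset by blast
qed

lemma openin_absval_ball:
  assumes "is_absval v" shows "openin (absval_topology v) {y. v (y - b) < r}"
  unfolding openin_absval_topology
proof
  fix y assume "y \<in> {y. v (y - b) < r}"
  moreover have "v (z - b) < r" if "v (z - y) < r - v (y - b)" for z
    using that absval_diff_triangle[OF assms, of z b y] by simp
  ultimately show "\<exists>e>0. \<forall>z. v (z - y) < e \<longrightarrow> z \<in> {y. v (y - b) < r}"
    by (intro exI[of _ "r - v (y - b)"]) auto
qed

text \<open>False for archimedean absolute values; here every point at distance \<open>\<ge> r\<close> from \<open>b\<close> has a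
  whole ball of radius \<open>r\<close> at distance \<open>\<ge> r\<close> from \<open>b\<close>.\<close>
lemma openin_absval_ball_complement:
  assumes "is_absval v" "nonarchimedean v" "0 < r"
  shows "openin (absval_topology v) {y. r \<le> v (y - b)}"
  unfolding openin_absval_topology
proof
  fix y assume y: "y \<in> {y. r \<le> v (y - b)}"
  have "r \<le> v (z - b)" if "v (z - y) < r" for z
    using y that nonarchimedean_diff[OF assms(2), of y b z] absval_minus_commute[OF assms(1), of y z]
    by auto
  then show "\<exists>e>0. \<forall>z. v (z - y) < e \<longrightarrow> z \<in> {y. r \<le> v (y - b)}"
    using assms(3) by blast
qed

definition absval_continuous :: "'x topology \<Rightarrow> ('k::field \<Rightarrow> real) \<Rightarrow> ('x \<Rightarrow> 'k) \<Rightarrow> bool" where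
  "absval_continuous X v f \<longleftrightarrow>
     (\<forall>x\<in>topspace X. \<forall>e>0. \<exists>W. openin X W \<and> x \<in> W \<and> (\<forall>y\<in>W. v (f y - f x) < e))"

lemma absval_continuousD:
  "absval_continuous X v f \<Longrightarrow> x \<in> topspace X \<Longrightarrow> 0 < e \<Longrightarrow>
    \<exists>W. openin X W \<and> x \<in> W \<and> (\<forall>y\<in>W. v (f y - f x) < e)"
  unfolding absval_continuous_def by blast

lemma continuous_map_absval_iff:
  assumes av: "is_absval v"
  shows "continuous_map X (absval_topology v) f \<longleftrightarrow> absval_continuous X v f"
proof
  assume c: "continuous_map X (absval_topology v) f"
  show "absval_continuous X v f" unfolding absval_continuous_def
  proof (intro ballI allI impI)
    fix x e assume x: "x \<in> topspace X" and e: "(e::real) > 0"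
    have "openin X {y \<in> topspace X. f y \<in> {z. v (z - f x) < e}}"
      using openin_continuous_map_preimage[OF c openin_absval_ball[OF av, of "f x" e]] .
    moreover have "x \<in> {y \<in> topspace X. f y \<in> {z. v (z - f x) < e}}"
      using x e absval_0[OF av] by simp
    ultimately show "\<exists>W. openin X W \<and> x \<in> W \<and> (\<forall>y\<in>W. v (f y - f x) < e)"
      by (intro exI[of _ "{y \<in> topspace X. f y \<in> {z. v (z - f x) < e}}"]) simp
  qed
next
  assume c: "absval_continuous X v f"
  show "continuous_map X (absval_topology v) f"
    unfolding continuous_map topspace_absval_topology
  proof (intro conjI allI impI)
    show "f ` topspace X \<subseteq> UNIV" by simp
    fix U assume "openin (absval_topology v) U"
    then have U: "\<forall>x\<in>U. \<exists>e>0. \<forall>y. v (y - x) < e \<longrightarrow> y \<in> U"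
      by (simp add: openin_absval_topology)
    show "openin X {x \<in> topspace X. f x \<in> U}"
      unfolding openin_subopen[of X "{x \<in> topspace X. f x \<in> U}"]
    proof
      fix x assume x: "x \<in> {x \<in> topspace X. f x \<in> U}"
      then obtain e where e: "e > 0" "\<forall>y. v (y - f x) < e \<longrightarrow> y \<in> U"
        using U by blast
      have "x \<in> topspace X" using x by simp
      then obtain W where W: "openin X W" "x \<in> W" "\<forall>y\<in>W. v (f y - f x) < e"
        using absval_continuousD[OF c _ e(1)] by blast
      have "W \<subseteq> topspace X" using W(1) by (rule openin_subset)
      then have "W \<subseteq> {x \<in> topspace X. f x \<in> U}" using e(2) W(3) by blast
      then show "\<exists>T. openin X T \<and> x \<in> T \<and> T \<subseteq> {x \<in> topspace X. f x \<in> U}" using W by blast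
    qed
  qed
qed

lemma absval_continuous_locally_constant:
  assumes "\<And>x. x \<in> topspace X \<Longrightarrow> \<exists>W. openin X W \<and> x \<in> W \<and> (\<forall>y\<in>W. f y = f x)"
    and "is_absval v"
  shows "absval_continuous X v f"
  unfolding absval_continuous_def
proof (intro ballI allI impI)
  fix x e assume x: "x \<in> topspace X" and "(e::real) > 0"
  obtain W where W: "openin X W" "x \<in> W" "\<forall>y\<in>W. f y = f x" using assms(1)[OF x] by blast
  have "\<forall>y\<in>W. v (f y - f x) < e" using W(3) \<open>e > 0\<close> absval_0[OF assms(2)] by force
  then show "\<exists>W. openin X W \<and> x \<in> W \<and> (\<forall>y\<in>W. v (f y - f x) < e)" using W(1,2) by blast
qed

lemma absval_continuous_add:
  assumes av: "is_absval v" and f: "absval_continuous X v f" and g: "absval_continuous X v g"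
  shows "absval_continuous X v (\<lambda>x. f x + g x)"
  unfolding absval_continuous_def
proof (intro ballI allI impI)
  fix x e assume x: "x \<in> topspace X" and e: "(e::real) > 0"
  have e2: "e/2 > 0" using e by simp
  obtain W1 where W1: "openin X W1" "x \<in> W1" "\<forall>y\<in>W1. v (f y - f x) < e/2"
    using absval_continuousD[OF f x e2] by blast
  obtain W2 where W2: "openin X W2" "x \<in> W2" "\<forall>y\<in>W2. v (g y - g x) < e/2"
    using absval_continuousD[OF g x e2] by blast
  have "v ((f y + g y) - (f x + g x)) < e" if y: "y \<in> W1 \<inter> W2" for y
  proof -
    have "v ((f y + g y) - (f x + g x)) \<le> v (f y - f x) + v (g y - g x)"
      using absval_triangle[OF av, of "f y - f x" "g y - g x"] by (simp add: algebra_simps)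
    moreover have "v (f y - f x) < e/2" "v (g y - g x) < e/2" using W1(3) W2(3) y by auto
    ultimately show ?thesis by linarith
  qed
  then show "\<exists>W. openin X W \<and> x \<in> W \<and> (\<forall>y\<in>W. v ((f y + g y) - (f x + g x)) < e)"
    using W1 W2 by (intro exI[of _ "W1 \<inter> W2"]) auto
qed

lemma absval_continuous_uminus:
  assumes av: "is_absval v" and f: "absval_continuous X v f"
  shows "absval_continuous X v (\<lambda>x. - f x)"
proof -
  have "v (- f y - - f x) = v (f y - f x)" for x y
    using absval_uminus[OF av, of "f y - f x"] by simp
  then show ?thesis using f unfolding absval_continuous_def by simp
qed

lemma absval_continuous_mult:
  assumes av: "is_absval v" and f: "absval_continuous X v f" and g: "absval_continuous X v g"
    and B: "B > 0" and fB: "\<forall>x\<in>topspace X. v (f x) \<le> B" and gB: "\<forall>x\<in>topspace X. v (g x) \<le> B"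
  shows "absval_continuous X v (\<lambda>x. f x * g x)"
  unfolding absval_continuous_def
proof (intro ballI allI impI)
  fix x e assume x: "x \<in> topspace X" and e: "(e::real) > 0"
  have d: "e/(2*B) > 0" using e B by simp
  obtain W1 where W1: "openin X W1" "x \<in> W1" "\<forall>y\<in>W1. v (f y - f x) < e/(2*B)"
    using absval_continuousD[OF f x d] by blast
  obtain W2 where W2: "openin X W2" "x \<in> W2" "\<forall>y\<in>W2. v (g y - g x) < e/(2*B)"
    using absval_continuousD[OF g x d] by blast
  have "v (f y * g y - f x * g x) < e" if y: "y \<in> W1 \<inter> W2" for y
  proof -
    have yX: "y \<in> topspace X" using y W1(1) openin_subset by blast
    have "f y * g y - f x * g x = f y * (g y - g x) + (f y - f x) * g x"
      by (simp add: algebra_simps)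
    then have "v (f y * g y - f x * g x) \<le> v (f y) * v (g y - g x) + v (f y - f x) * v (g x)"
      using absval_triangle[OF av] absval_mult[OF av] by metis
    also have "\<dots> \<le> B * v (g y - g x) + v (f y - f x) * B"
      using fB gB x yX absval_nonneg[OF av] B by (intro add_mono mult_mono) auto
    also have "\<dots> < B * (e/(2*B)) + (e/(2*B)) * B"
    proof -
      have "v (g y - g x) < e/(2*B)" "v (f y - f x) < e/(2*B)" using W1(3) W2(3) y by auto
      then show ?thesis using B by (intro add_strict_mono mult_strict_left_mono mult_strict_right_mono)
    qed
    also have "\<dots> = e" using B by (simp add: field_simps)
    finally show ?thesis .
  qed
  then show "\<exists>W. openin X W \<and> x \<in> W \<and> (\<forall>y\<in>W. v (f y * g y - f x * g x) < e)"
    using W1 W2 by (intro exI[of _ "W1 \<inter> W2"]) auto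
qed

lemma absval_continuous_inverse:
  assumes av: "is_absval v" and h: "absval_continuous X v h"
    and d: "d > 0" and hd: "\<forall>x\<in>topspace X. d \<le> v (h x)"
  shows "absval_continuous X v (\<lambda>x. inverse (h x))"
  unfolding absval_continuous_def
proof (intro ballI allI impI)
  fix x e assume x: "x \<in> topspace X" and e: "(e::real) > 0"
  have "e * (d * d) > 0" using e d by simp
  then obtain W where W: "openin X W" "x \<in> W" "\<forall>y\<in>W. v (h y - h x) < e * (d * d)"
    using absval_continuousD[OF h x] by blast
  have "v (inverse (h y) - inverse (h x)) < e" if y: "y \<in> W" for y
  proof -
    have hy: "d \<le> v (h y)" and hx: "d \<le> v (h x)"
      using hd x y W(1) openin_subset by auto
    then have "h y \<noteq> 0" "h x \<noteq> 0" using d absval_0[OF av] by auto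
    then have "inverse (h y) - inverse (h x) = - (inverse (h y) * (h y - h x) * inverse (h x))"
      by (rule inverse_diff_inverse)
    then have "v (inverse (h y) - inverse (h x))
        = inverse (v (h y)) * v (h y - h x) * inverse (v (h x))"
      by (simp only: absval_uminus[OF av] absval_mult[OF av] absval_inverse[OF av])
    also have "\<dots> = v (h y - h x) / (v (h y) * v (h x))"
      by (simp add: field_simps)
    also have "\<dots> \<le> v (h y - h x) / (d * d)"
      using hy hx d absval_nonneg[OF av] by (intro divide_left_mono mult_mono) auto
    also have "\<dots> < e" using W(3) y d by (simp add: field_simps)
    finally show ?thesis .
  qed
  then show "\<exists>W. openin X W \<and> x \<in> W \<and> (\<forall>y\<in>W. v (inverse (h y) - inverse (h x)) < e)"
    using W by blast
qed

section \<open>The ring of bounded continuous functions\<close>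

lemma Cbd_add [simp]: "f \<oplus>\<^bsub>Cbd X v\<^esub> g = (\<lambda>x. f x + g x)" by (simp add: Cbd_def)
lemma Cbd_mult [simp]: "f \<otimes>\<^bsub>Cbd X v\<^esub> g = (\<lambda>x. f x * g x)" by (simp add: Cbd_def)
lemma Cbd_one [simp]: "\<one>\<^bsub>Cbd X v\<^esub> = cst X 1" by (simp add: Cbd_def)
lemma Cbd_zero [simp]: "\<zero>\<^bsub>Cbd X v\<^esub> = (\<lambda>x. 0)" by (simp add: Cbd_def)

lemma cst_0: "cst X 0 = (\<lambda>x. 0)" by (simp add: cst_def fun_eq_iff)

definition clopenin :: "'x topology \<Rightarrow> 'x set \<Rightarrow> bool" where
  "clopenin X U \<longleftrightarrow> openin X U \<and> closedin X U"

lemma clopenin_Un: "clopenin X A \<Longrightarrow> clopenin X B \<Longrightarrow> clopenin X (A \<union> B)"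
  by (simp add: clopenin_def openin_Un closedin_Un)

lemma clopenin_Union: "finite F \<Longrightarrow> \<forall>A\<in>F. clopenin X A \<Longrightarrow> clopenin X (\<Union>F)"
  by (induction F rule: finite_induct) (auto simp: clopenin_def clopenin_Un)

lemma clopenin_diff: "clopenin X A \<Longrightarrow> clopenin X (topspace X - A)"
  by (simp add: clopenin_def closedin_diff openin_diff)

lemma clopenin_subset: "clopenin X A \<Longrightarrow> A \<subseteq> topspace X"
  by (simp add: clopenin_def openin_subset)

context
  fixes X :: "'x topology" and v :: "'k::field \<Rightarrow> real"
  assumes av: "is_absval v"
begin

lemma carrier_Cbd_iff:
  "f \<in> carrier (Cbd X v) \<longleftrightarrow> absval_continuous X v f \<and> (\<exists>B. \<forall>x\<in>topspace X. v (f x) \<le> B)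
     \<and> (\<forall>x. x \<notin> topspace X \<longrightarrow> f x = 0)"
  by (simp add: Cbd_def Cbd_set_def continuous_map_absval_iff[OF av])

lemma Cbd_continuous: "f \<in> carrier (Cbd X v) \<Longrightarrow> absval_continuous X v f"
  by (simp add: carrier_Cbd_iff)

lemma Cbd_vanishes: "f \<in> carrier (Cbd X v) \<Longrightarrow> x \<notin> topspace X \<Longrightarrow> f x = 0"
  by (simp add: carrier_Cbd_iff)

lemma Cbd_bounded: assumes "f \<in> carrier (Cbd X v)" obtains B where "0 < B" "\<forall>x\<in>topspace X. v (f x) \<le> B"
proof -
  obtain B where "\<forall>x\<in>topspace X. v (f x) \<le> B" using assms by (auto simp: carrier_Cbd_iff)
  then show thesis by (intro that[of "max B 1"]) auto
qed

lemma Cbd_carrierI: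
  "absval_continuous X v f \<Longrightarrow> \<forall>x\<in>topspace X. v (f x) \<le> B \<Longrightarrow> (\<And>x. x \<notin> topspace X \<Longrightarrow> f x = 0)
   \<Longrightarrow> f \<in> carrier (Cbd X v)"
  unfolding carrier_Cbd_iff by blast

lemma Cbd_add_closed:
  assumes f: "f \<in> carrier (Cbd X v)" and g: "g \<in> carrier (Cbd X v)"
  shows "(\<lambda>x. f x + g x) \<in> carrier (Cbd X v)"
proof -
  obtain B1 B2 where B1: "\<forall>x\<in>topspace X. v (f x) \<le> B1" and B2: "\<forall>x\<in>topspace X. v (g x) \<le> B2"
    using Cbd_bounded[OF f] Cbd_bounded[OF g] by metis
  have "\<forall>x\<in>topspace X. v (f x + g x) \<le> B1 + B2"
    using B1 B2 absval_triangle[OF av] by (fastforce intro: order_trans add_mono)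
  then show ?thesis
    by (rule Cbd_carrierI[OF absval_continuous_add[OF av Cbd_continuous[OF f] Cbd_continuous[OF g]]])
       (simp add: Cbd_vanishes[OF f] Cbd_vanishes[OF g])
qed

lemma Cbd_uminus_closed:
  assumes f: "f \<in> carrier (Cbd X v)" shows "(\<lambda>x. - f x) \<in> carrier (Cbd X v)"
proof -
  obtain B where "\<forall>x\<in>topspace X. v (f x) \<le> B" using Cbd_bounded[OF f] by metis
  then have "\<forall>x\<in>topspace X. v (- f x) \<le> B" by (simp add: absval_uminus[OF av])
  then show ?thesis
    by (rule Cbd_carrierI[OF absval_continuous_uminus[OF av Cbd_continuous[OF f]]])
       (simp add: Cbd_vanishes[OF f])
qed

lemma Cbd_diff_closed:
  "f \<in> carrier (Cbd X v) \<Longrightarrow> g \<in> carrier (Cbd X v) \<Longrightarrow> (\<lambda>x. f x - g x) \<in> carrier (Cbd X v)"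
  using Cbd_add_closed[OF _ Cbd_uminus_closed, of f g] by simp

lemma Cbd_mult_closed:
  assumes f: "f \<in> carrier (Cbd X v)" and g: "g \<in> carrier (Cbd X v)"
  shows "(\<lambda>x. f x * g x) \<in> carrier (Cbd X v)"
proof -
  obtain B1 where B1: "B1 > 0" "\<forall>x\<in>topspace X. v (f x) \<le> B1" using Cbd_bounded[OF f] by metis
  obtain B2 where B2: "B2 > 0" "\<forall>x\<in>topspace X. v (g x) \<le> B2" using Cbd_bounded[OF g] by metis
  have "\<forall>x\<in>topspace X. v (f x) \<le> max B1 B2" "\<forall>x\<in>topspace X. v (g x) \<le> max B1 B2"
    using B1 B2 by force+
  moreover have "max B1 B2 > 0" using B1(1) by simp
  ultimately have cont: "absval_continuous X v (\<lambda>x. f x * g x)"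
    by (intro absval_continuous_mult[OF av Cbd_continuous[OF f] Cbd_continuous[OF g]])
  have "\<forall>x\<in>topspace X. v (f x * g x) \<le> B1 * B2"
    using B1 B2 by (simp add: absval_mult[OF av] absval_nonneg[OF av] mult_mono)
  then show ?thesis by (rule Cbd_carrierI[OF cont]) (simp add: Cbd_vanishes[OF f])
qed

lemma Cbd_cst_closed: "cst X c \<in> carrier (Cbd X v)"
proof (rule Cbd_carrierI)
  show "absval_continuous X v (cst X c)"
    by (rule absval_continuous_locally_constant[OF _ av], rule exI[of _ "topspace X"])
       (simp add: cst_def)
  show "\<forall>x\<in>topspace X. v (cst X c x) \<le> v c" by (simp add: cst_def)
qed (simp add: cst_def)

lemma Cbd_zero_closed: "(\<lambda>x. 0) \<in> carrier (Cbd X v)"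
  using Cbd_cst_closed[of 0] by (simp add: cst_0)

lemma Cbd_inverse_closed:
  assumes h: "h \<in> carrier (Cbd X v)" and d: "d > 0" and hd: "\<forall>x\<in>topspace X. d \<le> v (h x)"
  shows "(\<lambda>x. inverse (h x)) \<in> carrier (Cbd X v)"
proof (rule Cbd_carrierI)
  show "absval_continuous X v (\<lambda>x. inverse (h x))"
    by (rule absval_continuous_inverse[OF av Cbd_continuous[OF h] d hd])
  show "\<forall>x\<in>topspace X. v (inverse (h x)) \<le> inverse d"
    using hd d by (simp add: absval_inverse[OF av] le_imp_inverse_le)
qed (simp add: Cbd_vanishes[OF h])

lemma Cbd_indicator_closed:
  assumes U: "clopenin X U" shows "indicator U \<in> carrier (Cbd X v)"
proof (rule Cbd_carrierI)
  show "absval_continuous X v (indicator U)"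
  proof (rule absval_continuous_locally_constant[OF _ av])
    fix x assume x: "x \<in> topspace X"
    show "\<exists>W. openin X W \<and> x \<in> W \<and> (\<forall>y\<in>W. indicator U y = indicator U x)"
    proof (cases "x \<in> U")
      case True then show ?thesis using U by (intro exI[of _ U]) (simp add: clopenin_def)
    next
      case False then show ?thesis using clopenin_diff[OF U] x
        by (intro exI[of _ "topspace X - U"]) (simp add: clopenin_def)
    qed
  qed
  show "\<forall>x\<in>topspace X. v (indicator U x) \<le> 1"
    by (simp add: indicator_def absval_0[OF av] absval_1[OF av])
qed (use clopenin_subset[OF U] in \<open>auto simp: indicator_def\<close>)

lemma cring_Cbd: "cring (Cbd X v)"
proof (rule cringI)
  show "abelian_group (Cbd X v)"
  proof (rule abelian_groupI)
    fix x assume x: "x \<in> carrier (Cbd X v)"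
    then show "\<exists>y\<in>carrier (Cbd X v). y \<oplus>\<^bsub>Cbd X v\<^esub> x = \<zero>\<^bsub>Cbd X v\<^esub>"
      using Cbd_uminus_closed[OF x] by (intro bexI[of _ "\<lambda>y. - x y"]) simp_all
  qed (simp_all add: Cbd_add_closed Cbd_zero_closed ac_simps)
next
  show "comm_monoid (Cbd X v)"
  proof (rule comm_monoidI)
    fix x assume "x \<in> carrier (Cbd X v)"
    then show "\<one>\<^bsub>Cbd X v\<^esub> \<otimes>\<^bsub>Cbd X v\<^esub> x = x" by (simp add: fun_eq_iff cst_def Cbd_vanishes)
  qed (simp_all add: Cbd_mult_closed Cbd_cst_closed ac_simps)
qed (simp add: distrib_right)

lemma Cbd_a_inv: assumes f: "f \<in> carrier (Cbd X v)" shows "\<ominus>\<^bsub>Cbd X v\<^esub> f = (\<lambda>x. - f x)"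
proof -
  interpret cring "Cbd X v" by (rule cring_Cbd)
  show ?thesis by (rule minus_equality) (simp_all add: f Cbd_uminus_closed)
qed

lemma Cbd_a_minus:
  "f \<in> carrier (Cbd X v) \<Longrightarrow> g \<in> carrier (Cbd X v) \<Longrightarrow> f \<ominus>\<^bsub>Cbd X v\<^esub> g = (\<lambda>x. f x - g x)"
  by (simp add: a_minus_def Cbd_a_inv)

end

lemma sup_norm_le:
  "topspace X \<noteq> {} \<Longrightarrow> \<forall>x\<in>topspace X. v (h x) \<le> c \<Longrightarrow> sup_norm X v h \<le> c"
  unfolding sup_norm_def sup0_def by (simp add: cSUP_least)

lemma absval_le_sup_norm:
  assumes "is_absval v" "f \<in> carrier (Cbd X v)" "x \<in> topspace X"
  shows "v (f x) \<le> sup_norm X v f"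
proof -
  obtain B where "\<forall>x\<in>topspace X. v (f x) \<le> B" using Cbd_bounded[OF assms(1,2)] by metis
  then have "bdd_above ((\<lambda>x. v (f x)) ` topspace X)" by (intro bdd_aboveI2) blast
  then show ?thesis using assms(3) cSUP_upper unfolding sup_norm_def sup0_def by fastforce
qed

section \<open>Maximal ideals of the ring\<close>

locale Cbd_maximal_ideal =
  fixes X :: "'x topology" and v :: "'k::field \<Rightarrow> real" and m :: "('x \<Rightarrow> 'k) set"
  assumes absval: "is_absval v" and maximal: "maximalideal m (Cbd X v)"
begin

sublocale R: cring "Cbd X v" by (rule cring_Cbd[OF absval])
sublocale M: maximalideal m "Cbd X v" by (rule maximal)

lemma mem_carrier: "f \<in> m \<Longrightarrow> f \<in> carrier (Cbd X v)"
  using M.a_subset by blast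

lemma add_mem: "f \<in> m \<Longrightarrow> g \<in> m \<Longrightarrow> (\<lambda>x. f x + g x) \<in> m"
  using M.a_closed by simp

lemma mult_mem: "f \<in> m \<Longrightarrow> g \<in> carrier (Cbd X v) \<Longrightarrow> (\<lambda>x. g x * f x) \<in> m"
  using M.I_l_closed by simp

lemma uminus_mem: "f \<in> m \<Longrightarrow> (\<lambda>x. - f x) \<in> m"
  using M.a_inv_closed Cbd_a_inv[OF absval mem_carrier] by metis

lemma diff_mem: "f \<in> m \<Longrightarrow> g \<in> m \<Longrightarrow> (\<lambda>x. f x - g x) \<in> m"
  using add_mem[OF _ uminus_mem, of f g] by simp

lemma zero_mem: "(\<lambda>x. 0) \<in> m"
  using M.zero_closed by simp

lemma one_not_mem: "cst X 1 \<notin> m"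
  using M.one_imp_carrier M.I_notcarr by auto

lemma mem_or_mem_if_mult_mem:
  "f \<in> carrier (Cbd X v) \<Longrightarrow> g \<in> carrier (Cbd X v) \<Longrightarrow> (\<lambda>x. f x * g x) \<in> m \<Longrightarrow> f \<in> m \<or> g \<in> m"
  using primeideal.I_prime[OF R.maximalideal_prime[OF maximal]] by simp

lemma invertible_mod_if_not_mem:
  assumes h: "h \<in> carrier (Cbd X v)" and hm: "h \<notin> m"
  obtains g i where "g \<in> carrier (Cbd X v)" "i \<in> m" "cst X 1 = (\<lambda>x. g x * h x + i x)"
proof -
  let ?J = "m <+>\<^bsub>Cbd X v\<^esub> PIdl\<^bsub>Cbd X v\<^esub> h"
  have J: "ideal ?J (Cbd X v)" by (rule R.add_ideals[OF M.is_ideal R.cgenideal_ideal[OF h]])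
  have "m \<union> PIdl\<^bsub>Cbd X v\<^esub> h \<subseteq> ?J"
    using R.union_genideal[OF M.is_ideal R.cgenideal_ideal[OF h]] M.a_subset
      R.cgenideal_ideal[OF h] ideal.axioms(1) additive_subgroup.a_subset
    by (metis R.genideal_self le_sup_iff)
  then have "?J \<noteq> m" "m \<subseteq> ?J" using R.cgenideal_self[OF h] hm by auto
  moreover have "?J \<subseteq> carrier (Cbd X v)" using J ideal.axioms(1) additive_subgroup.a_subset by blast
  ultimately have "\<one>\<^bsub>Cbd X v\<^esub> \<in> ?J" using M.I_maximal[OF J] by blast
  then obtain i k where "i \<in> m" "k \<in> PIdl\<^bsub>Cbd X v\<^esub> h" "\<one>\<^bsub>Cbd X v\<^esub> = i \<oplus>\<^bsub>Cbd X v\<^esub> k"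
    unfolding set_add_def' by blast
  moreover from this(2) obtain g where "g \<in> carrier (Cbd X v)" "k = g \<otimes>\<^bsub>Cbd X v\<^esub> h"
    unfolding cgenideal_def by blast
  ultimately show thesis by (intro that[of g i]) (simp_all add: add.commute)
qed

lemma mem_if_mult_mem_bounded_below:
  assumes f: "f \<in> carrier (Cbd X v)" and w: "w \<in> carrier (Cbd X v)"
    and d: "d > 0" and wd: "\<forall>x\<in>topspace X. d \<le> v (w x)" and fw: "(\<lambda>x. f x * w x) \<in> m"
  shows "f \<in> m"
proof -
  have "(\<lambda>x. inverse (w x) * (f x * w x)) \<in> m"
    using mult_mem[OF fw Cbd_inverse_closed[OF absval w d wd]] .
  moreover have "(\<lambda>x. inverse (w x) * (f x * w x)) = f"
  proof
    fix x show "inverse (w x) * (f x * w x) = f x"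
    proof (cases "x \<in> topspace X")
      case True
      then have "w x \<noteq> 0" using wd d absval_0[OF absval] by force
      then show ?thesis by simp
    qed (simp add: Cbd_vanishes[OF absval f])
  qed
  ultimately show ?thesis by simp
qed

lemma not_mem_if_bounded_below:
  assumes h: "h \<in> carrier (Cbd X v)" and "d > 0" and "\<forall>x\<in>topspace X. d \<le> v (h x)"
  shows "h \<notin> m"
proof
  assume "h \<in> m"
  moreover have "(\<lambda>x. cst X 1 x * h x) = h"
    by (simp add: fun_eq_iff cst_def Cbd_vanishes[OF absval h])
  ultimately have "cst X 1 \<in> m"
    using mem_if_mult_mem_bounded_below[OF Cbd_cst_closed[OF absval] h assms(2,3)] by simp
  then show False using one_not_mem by simp
qed

lemma topspace_nonempty: "topspace X \<noteq> {}"
  using one_not_mem zero_mem by (force simp: cst_def)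

lemma cst_eq_if_diff_mem:
  assumes "(\<lambda>x. cst X a x - cst X b x) \<in> m" shows "a = b"
proof (rule ccontr)
  assume "a \<noteq> b"
  then have "v (a - b) > 0" by (simp add: absval_pos[OF absval])
  moreover have "\<forall>x\<in>topspace X. v (a - b) \<le> v (cst X a x - cst X b x)" by (simp add: cst_def)
  moreover have "(\<lambda>x. cst X a x - cst X b x) \<in> carrier (Cbd X v)"
    using Cbd_diff_closed[OF absval Cbd_cst_closed[OF absval] Cbd_cst_closed[OF absval]] .
  ultimately show False using not_mem_if_bounded_below assms by blast
qed

lemma a_r_coset_eq_iff:
  assumes f: "f \<in> carrier (Cbd X v)" and g: "g \<in> carrier (Cbd X v)"
  shows "m +>\<^bsub>Cbd X v\<^esub> f = m +>\<^bsub>Cbd X v\<^esub> g \<longleftrightarrow> (\<lambda>x. f x - g x) \<in> m"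
proof -
  have "f \<in> m +>\<^bsub>Cbd X v\<^esub> g \<longleftrightarrow> (\<lambda>x. f x - g x) \<in> m"
    using M.a_rcos_module_minus[OF R.ring_axioms g f] Cbd_a_minus[OF absval f g] by simp
  then show ?thesis
    using M.a_rcos_self[OF f] M.a_repr_independence'[OF _ g] by metis
qed

text \<open>Large clopen sets behave like an ultrafilter in the Boolean algebra of clopen subsets of \<open>X\<close>.\<close>
definition large :: "'x set \<Rightarrow> bool" where
  "large U \<longleftrightarrow> indicator U \<notin> m"

lemma large_topspace: "large (topspace X)"
proof -
  have "indicator (topspace X) = cst X (1::'k)" by (simp add: indicator_def cst_def fun_eq_iff)
  then show ?thesis unfolding large_def using one_not_mem by simp
qed

lemma not_large_empty: "\<not> large {}"
proof -
  have "indicator ({}::'x set) = (\<lambda>x. 0::'k)" by (simp add: fun_eq_iff)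
  then show ?thesis using zero_mem by (simp add: large_def)
qed

lemma large_mono:
  assumes "clopenin X A" "A \<subseteq> B" "large A" shows "large B"
proof -
  have "(\<lambda>x. indicator A x * indicator B x) = (indicator A :: 'x \<Rightarrow> 'k)"
    using assms(2) by (auto simp: indicator_def fun_eq_iff)
  then show ?thesis
    using assms mult_mem[of "indicator B" "indicator A"] Cbd_indicator_closed[OF absval]
    by (auto simp: large_def mult.commute)
qed

lemma large_Un:
  assumes A: "clopenin X A" and B: "clopenin X B" and AB: "large (A \<union> B)"
  shows "large A \<or> large B"
proof (rule ccontr)
  assume "\<not> (large A \<or> large B)"
  then have "indicator A \<in> m" "indicator B \<in> m" by (auto simp: large_def)
  then have "(\<lambda>x. indicator A x + indicator (topspace X - A) x * indicator B x) \<in> m"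
    using add_mem mult_mem Cbd_indicator_closed[OF absval clopenin_diff[OF A]] by blast
  moreover have "(\<lambda>x. indicator A x + indicator (topspace X - A) x * indicator B x)
      = (indicator (A \<union> B) :: 'x \<Rightarrow> 'k)"
    using clopenin_subset[OF A] clopenin_subset[OF B] by (auto simp: indicator_def fun_eq_iff)
  ultimately show False using AB by (simp add: large_def)
qed

lemma large_finite_Union:
  "finite F \<Longrightarrow> \<forall>A\<in>F. clopenin X A \<Longrightarrow> large (\<Union>F) \<Longrightarrow> \<exists>A\<in>F. large A"
proof (induction F rule: finite_induct)
  case empty then show ?case using not_large_empty by simp
next
  case (insert A F)
  then have "large A \<or> large (\<Union>F)" using large_Un[of A "\<Union>F"] clopenin_Union[of F X] by simp
  then show ?case using insert by blast
qed

lemma large_Int_nonempty: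
  assumes A: "clopenin X A" and B: "clopenin X B" and "large A" "large B"
  shows "A \<inter> B \<noteq> {}"
proof
  assume "A \<inter> B = {}"
  then have "(\<lambda>x. indicator A x * indicator B x) = (\<lambda>x. 0::'k)"
    by (auto simp: indicator_def fun_eq_iff)
  then have "indicator A \<in> m \<or> indicator B \<in> m"
    using mem_or_mem_if_mult_mem[OF Cbd_indicator_closed[OF absval A] Cbd_indicator_closed[OF absval B]]
      zero_mem by simp
  then show False using assms by (simp add: large_def)
qed

end

locale nonarch_Cbd_maximal_ideal =
  Cbd_maximal_ideal X v m for X :: "'x topology" and v :: "'k::field \<Rightarrow> real" and m +
  assumes nonarch: "nonarchimedean v"
begin

definition near :: "('x \<Rightarrow> 'k) \<Rightarrow> 'k \<Rightarrow> real \<Rightarrow> 'x set" where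
  "near f b r = {x \<in> topspace X. v (f x - b) < r}"

lemma clopenin_near:
  assumes f: "f \<in> carrier (Cbd X v)" and r: "r > 0" shows "clopenin X (near f b r)"
proof -
  have c: "continuous_map X (absval_topology v) f"
    using Cbd_continuous[OF absval f] continuous_map_absval_iff[OF absval] by blast
  have "openin X {x \<in> topspace X. f x \<in> {y. v (y - b) < r}}"
    using openin_continuous_map_preimage[OF c openin_absval_ball[OF absval]] .
  moreover have "openin X {x \<in> topspace X. f x \<in> {y. r \<le> v (y - b)}}"
    using openin_continuous_map_preimage[OF c openin_absval_ball_complement[OF absval nonarch r]] .
  moreover have "{x \<in> topspace X. f x \<in> {y. r \<le> v (y - b)}} = topspace X - near f b r"
    by (auto simp: near_def)
  ultimately show ?thesis by (simp add: clopenin_def closedin_def near_def)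
qed

lemma near_subset_near:
  assumes "v (c - a) < r" "s \<le> r" shows "near f c s \<subseteq> near f a r"
proof
  fix x assume "x \<in> near f c s"
  moreover have "v (f x - a) \<le> max (v (f x - c)) (v (c - a))" by (rule nonarchimedean_diff[OF nonarch])
  ultimately show "x \<in> near f a r" using assms by (auto simp: near_def)
qed

lemma centres_close_if_large_near:
  assumes f: "f \<in> carrier (Cbd X v)" and "r > 0" "s > 0" "large (near f c r)" "large (near f d s)"
  shows "v (c - d) < max r s"
proof -
  obtain x where x: "x \<in> near f c r" "x \<in> near f d s"
    using large_Int_nonempty[OF clopenin_near[OF f] clopenin_near[OF f]] assms by blast
  then show ?thesis
    using nonarchimedean_diff[OF nonarch, of c d "f x"] absval_minus_commute[OF absval, of c "f x"]
    by (auto simp: near_def)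
qed

lemma not_large_near_if_not_mem:
  assumes f: "f \<in> carrier (Cbd X v)" and hm: "(\<lambda>x. f x - cst X b x) \<notin> m"
  obtains r where "r > 0" "\<not> large (near f b r)"
proof -
  let ?h = "\<lambda>x. f x - cst X b x"
  have h: "?h \<in> carrier (Cbd X v)" by (rule Cbd_diff_closed[OF absval f Cbd_cst_closed[OF absval]])
  obtain g i where g: "g \<in> carrier (Cbd X v)" and i: "i \<in> m" and gi: "cst X 1 = (\<lambda>x. g x * ?h x + i x)"
    using invertible_mod_if_not_mem[OF h hm] by blast
  obtain M where M: "M > 0" "\<forall>x\<in>topspace X. v (g x) \<le> M" using Cbd_bounded[OF absval g] by blast
  define r where "r = 1 / M"
  have r: "r > 0" using M by (simp add: r_def)
  let ?U = "near f b r"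
  let ?e = "indicator ?U :: 'x \<Rightarrow> 'k"
  have e: "?e \<in> carrier (Cbd X v)" by (rule Cbd_indicator_closed[OF absval clopenin_near[OF f r]])
  let ?w = "\<lambda>x. cst X 1 x - ?e x * (g x * ?h x)"
  have w: "?w \<in> carrier (Cbd X v)"
    using Cbd_diff_closed[OF absval Cbd_cst_closed[OF absval] Cbd_mult_closed[OF absval e
          Cbd_mult_closed[OF absval g h]]] .
  have w1: "\<forall>x\<in>topspace X. 1 \<le> v (?w x)"
  proof
    fix x assume x: "x \<in> topspace X"
    show "1 \<le> v (?w x)"
    proof (cases "x \<in> ?U")
      case True
      then have "v (?h x) < r" using x by (simp add: near_def cst_def)
      have "v (g x) * v (?h x) \<le> M * v (?h x)"
        using M x absval_nonneg[OF absval] by (simp add: mult_right_mono)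
      also have "\<dots> < M * r" using \<open>v (?h x) < r\<close> M by simp
      finally have "v (g x * ?h x) < 1" using M by (simp add: r_def absval_mult[OF absval])
      then show ?thesis
        using nonarchimedean_one_minus[OF absval nonarch] True x by (simp add: cst_def)
    qed (use x absval_1[OF absval] in \<open>simp add: cst_def\<close>)
  qed
  have "(\<lambda>x. ?e x * ?w x) = (\<lambda>x. ?e x * i x)"
  proof
    fix x
    have "i x = cst X 1 x - g x * ?h x" using fun_cong[OF gi, of x] by simp
    then show "?e x * ?w x = ?e x * i x" by (simp add: indicator_def algebra_simps)
  qed
  then have "(\<lambda>x. ?e x * ?w x) \<in> m" using mult_mem[OF i e] by simp
  then have "?e \<in> m"
    using mem_if_mult_mem_bounded_below[OF e w zero_less_one w1] by simp
  then show thesis using that r by (simp add: large_def)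
qed


lemma absval_le_sup_norm_cst_add:
  assumes g: "g \<in> m" shows "v a \<le> sup_norm X v (\<lambda>x. cst X a x + g x)"
proof -
  have hc: "(\<lambda>x. cst X a x + g x) \<in> carrier (Cbd X v)"
    by (rule Cbd_add_closed[OF absval Cbd_cst_closed[OF absval] mem_carrier[OF g]])
  have le_h: "v (a + g x) \<le> sup_norm X v (\<lambda>x. cst X a x + g x)" if "x \<in> topspace X" for x
    using absval_le_sup_norm[OF absval hc that] that by (simp add: cst_def)
  show ?thesis
  proof (cases "a = 0")
    case True
    obtain x where "x \<in> topspace X" using topspace_nonempty by blast
    then show ?thesis
      using le_h absval_nonneg[OF absval, of "a + g x"] True absval_0[OF absval] by fastforce
  next
    case False
    txt \<open>\<open>g \<in> m\<close> cannot stay away from zero by \<open>v a\<close>, and where it is smaller, \<open>v (a + g x) = v a\<close>.\<close>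
    then obtain x where x: "x \<in> topspace X" "v (g x) < v a"
      using not_mem_if_bounded_below[OF mem_carrier[OF g] absval_pos[OF absval False]] g by force
    then show ?thesis
      using le_h[OF x(1)] nonarchimedean_add_eq_left[OF absval nonarch x(2)] by simp
  qed
qed

lemma sup_norm_cst_add:
  assumes g: "g \<in> m"
  shows "sup_norm X v (cst X a \<oplus>\<^bsub>Cbd X v\<^esub> g) = max (v a) (sup_norm X v g)"
proof -
  have gc: "g \<in> carrier (Cbd X v)" by (rule mem_carrier[OF g])
  let ?h = "\<lambda>x. cst X a x + g x"
  have hc: "?h \<in> carrier (Cbd X v)" by (rule Cbd_add_closed[OF absval Cbd_cst_closed[OF absval] gc])
  have hx: "?h x = a + g x" if "x \<in> topspace X" for x using that by (simp add: cst_def)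
  have "sup_norm X v ?h \<le> max (v a) (sup_norm X v g)"
  proof (intro sup_norm_le[OF topspace_nonempty] ballI)
    fix x assume x: "x \<in> topspace X"
    show "v (?h x) \<le> max (v a) (sup_norm X v g)"
      using hx[OF x] absval_le_sup_norm[OF absval gc x] nonarchimedeanD[OF nonarch, of a "g x"]
      by auto
  qed
  moreover have "sup_norm X v g \<le> max (v a) (sup_norm X v ?h)"
  proof (intro sup_norm_le[OF topspace_nonempty] ballI)
    fix x assume x: "x \<in> topspace X"
    have "v (g x) \<le> max (v (a + g x)) (v (- a))"
      using nonarchimedeanD[OF nonarch, of "a + g x" "- a"] by simp
    then show "v (g x) \<le> max (v a) (sup_norm X v ?h)"
      using absval_le_sup_norm[OF absval hc x] hx[OF x] by (auto simp: absval_uminus[OF absval])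
  qed
  moreover have "v a \<le> sup_norm X v ?h" by (rule absval_le_sup_norm_cst_add[OF g])
  ultimately show ?thesis by simp
qed

end

locale proper_nonarch_Cbd_maximal_ideal =
  nonarch_Cbd_maximal_ideal X v m for X :: "'x topology" and v :: "'k::field \<Rightarrow> real" and m +
  assumes complete: "absval_complete v" and totally_bounded: "bounded_totally_bounded v"
begin

lemma exists_large_near:
  assumes f: "f \<in> carrier (Cbd X v)" and r: "r > 0" shows "\<exists>c. large (near f c r)"
proof -
  obtain M where M: "\<forall>x\<in>topspace X. v (f x) \<le> M" using Cbd_bounded[OF absval f] by blast
  obtain F where F: "finite F" "\<forall>y. v y \<le> M \<longrightarrow> (\<exists>b\<in>F. v (y - b) < r)"
    using totally_bounded r unfolding bounded_totally_bounded_def by blast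
  let ?G = "(\<lambda>b. near f b r) ` F"
  have "topspace X \<subseteq> \<Union>?G"
  proof
    fix x assume x: "x \<in> topspace X"
    then obtain b where "b \<in> F" "v (f x - b) < r" using F(2) M by blast
    then show "x \<in> \<Union>?G" using x by (auto simp: near_def)
  qed
  then have "\<Union>?G = topspace X" by (auto simp: near_def)
  then have "\<exists>A\<in>?G. large A"
    using large_finite_Union[of ?G] F(1) clopenin_near[OF f r] large_topspace by auto
  then show ?thesis by blast
qed

text \<open>Centres of large sets of radius \<open>1/(n+1)\<close> form a Cauchy sequence; its limit is a centre of
  large sets of every radius.\<close>
lemma exists_centre_of_large_near:
  assumes f: "f \<in> carrier (Cbd X v)" shows "\<exists>a. \<forall>r>0. large (near f a r)"
proof -
  define rr :: "nat \<Rightarrow> real" where "rr n = inverse (real (Suc n))" for n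
  have rr_pos: "rr n > 0" for n by (simp add: rr_def)
  have rr_mono: "n \<le> k \<Longrightarrow> rr k \<le> rr n" for n k by (simp add: rr_def le_imp_inverse_le)
  have rr_small: "\<exists>N. rr N < e" if "e > 0" for e
    using reals_Archimedean[OF that] by (auto simp: rr_def)
  define c where "c n = (SOME c. large (near f c (rr n)))" for n
  have c: "large (near f (c n) (rr n))" for n
    unfolding c_def using exists_large_near[OF f rr_pos] by (rule someI_ex)
  have c_close: "v (c n - c k) < max (rr n) (rr k)" for n k
    by (rule centres_close_if_large_near[OF f rr_pos rr_pos c c])
  have "\<forall>e>0. \<exists>N. \<forall>n\<ge>N. \<forall>k\<ge>N. v (c n - c k) < e"
  proof (intro allI impI)
    fix e :: real assume "e > 0"
    then obtain N where N: "rr N < e" using rr_small by blast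
    have "v (c n - c k) < e" if "n \<ge> N" "k \<ge> N" for n k
      using c_close[of n k] rr_mono[OF that(1)] rr_mono[OF that(2)] N by auto
    then show "\<exists>N. \<forall>n\<ge>N. \<forall>k\<ge>N. v (c n - c k) < e" by blast
  qed
  then obtain a where a: "\<forall>e>0. \<exists>N. \<forall>n\<ge>N. v (c n - a) < e"
    using complete unfolding absval_complete_def by blast
  have "large (near f a r)" if r: "r > 0" for r
  proof -
    obtain N1 where N1: "\<forall>n\<ge>N1. v (c n - a) < r" using a r by blast
    obtain N2 where N2: "rr N2 < r" using rr_small[OF r] by blast
    define n where "n = max N1 N2"
    have "v (c n - a) < r" "rr n \<le> r" using N1 N2 rr_mono[of N2 n] by (auto simp: n_def)
    then have "near f (c n) (rr n) \<subseteq> near f a r" by (rule near_subset_near)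
    then show ?thesis using large_mono[OF clopenin_near[OF f rr_pos] _ c] by blast
  qed
  then show ?thesis by blast
qed

lemma residue_exists:
  assumes f: "f \<in> carrier (Cbd X v)" shows "\<exists>a. (\<lambda>x. f x - cst X a x) \<in> m"
proof -
  obtain a where "\<forall>r>0. large (near f a r)" using exists_centre_of_large_near[OF f] by blast
  then show ?thesis using not_large_near_if_not_mem[OF f] by metis
qed


lemma bij_betw_cst_Quot:
  "bij_betw (\<lambda>a. m +>\<^bsub>Cbd X v\<^esub> cst X a) UNIV (carrier (Cbd X v Quot m))"
  unfolding bij_betw_def
proof
  show "inj_on (\<lambda>a. m +>\<^bsub>Cbd X v\<^esub> cst X a) UNIV"
    by (rule inj_onI)
       (simp add: a_r_coset_eq_iff[OF Cbd_cst_closed[OF absval] Cbd_cst_closed[OF absval]]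
         cst_eq_if_diff_mem)
  have "m +>\<^bsub>Cbd X v\<^esub> f \<in> range (\<lambda>a. m +>\<^bsub>Cbd X v\<^esub> cst X a)" if f: "f \<in> carrier (Cbd X v)" for f
    using residue_exists[OF f] a_r_coset_eq_iff[OF f Cbd_cst_closed[OF absval]] by fastforce
  then show "range (\<lambda>a. m +>\<^bsub>Cbd X v\<^esub> cst X a) = carrier (Cbd X v Quot m)"
    using Cbd_cst_closed[OF absval] by (auto simp: FactRing_def A_RCOSETS_def' image_iff) blast
qed

lemma ex1_cst_add_mem:
  assumes f: "f \<in> carrier (Cbd X v)" shows "\<exists>!a. \<exists>g\<in>m. f = cst X a \<oplus>\<^bsub>Cbd X v\<^esub> g"
proof -
  obtain a where a: "(\<lambda>x. f x - cst X a x) \<in> m" using residue_exists[OF f] by blast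
  then have "\<exists>g\<in>m. f = cst X a \<oplus>\<^bsub>Cbd X v\<^esub> g" by force
  moreover have "b = a" if "g \<in> m" "f = cst X b \<oplus>\<^bsub>Cbd X v\<^esub> g" for b g
  proof -
    have "(\<lambda>x. (f x - cst X a x) - g x) \<in> m" by (rule diff_mem[OF a that(1)])
    then show "b = a" using that(2) cst_eq_if_diff_mem by simp
  qed
  ultimately show ?thesis by blast
qed

lemma eval_max_eqI:
  assumes f: "f \<in> carrier (Cbd X v)" and a: "(\<lambda>x. f x - cst X a x) \<in> m"
  shows "eval_max X v m f = a"
  unfolding eval_max_def
proof (rule the_equality)
  show "m +>\<^bsub>Cbd X v\<^esub> cst X a = m +>\<^bsub>Cbd X v\<^esub> f"
    using uminus_mem[OF a] a_r_coset_eq_iff[OF Cbd_cst_closed[OF absval] f] by simp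
next
  fix b assume "m +>\<^bsub>Cbd X v\<^esub> cst X b = m +>\<^bsub>Cbd X v\<^esub> f"
  then have "(\<lambda>x. cst X b x - f x) \<in> m"
    using a_r_coset_eq_iff[OF Cbd_cst_closed[OF absval] f] by simp
  then have "(\<lambda>x. (cst X b x - f x) + (f x - cst X a x)) \<in> m" using add_mem[OF _ a] by blast
  then show "b = a" using cst_eq_if_diff_mem by simp
qed

lemma absval_eval_max_le_sup_norm:
  assumes f: "f \<in> carrier (Cbd X v)" shows "v (eval_max X v m f) \<le> sup_norm X v f"
proof -
  obtain a where a: "(\<lambda>x. f x - cst X a x) \<in> m" using residue_exists[OF f] by blast
  have "sup_norm X v f = max (v a) (sup_norm X v (\<lambda>x. f x - cst X a x))"
    using sup_norm_cst_add[OF a, of a] by simp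
  then show ?thesis using eval_max_eqI[OF f a] by simp
qed

end

lemma proper_nonarch_Cbd_maximal_idealI:
  "is_absval v \<Longrightarrow> nonarchimedean v \<Longrightarrow> absval_complete v \<Longrightarrow> bounded_totally_bounded v \<Longrightarrow>
    maximalideal m (Cbd X v) \<Longrightarrow> proper_nonarch_Cbd_maximal_ideal X v m"
  by (intro proper_nonarch_Cbd_maximal_ideal.intro nonarch_Cbd_maximal_ideal.intro
      Cbd_maximal_ideal.intro proper_nonarch_Cbd_maximal_ideal_axioms.intro
      nonarch_Cbd_maximal_ideal_axioms.intro)

lemma maximalideal_vanishing_at:
  fixes X :: "'x topology" and v :: "'k::field \<Rightarrow> real"
  assumes av: "is_absval v" and x0: "x0 \<in> topspace X"
  shows "maximalideal {g \<in> carrier (Cbd X v). g x0 = 0} (Cbd X v)"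
proof -
  interpret cring "Cbd X v" by (rule cring_Cbd[OF av])
  let ?I = "{g \<in> carrier (Cbd X v). g x0 = 0}"
  have "subgroup ?I (add_monoid (Cbd X v))"
    by (rule add.subgroupI) (auto simp: Cbd_a_inv[OF av] Cbd_uminus_closed[OF av]
        Cbd_add_closed[OF av] Cbd_zero_closed[OF av] simp flip: a_inv_def)
  then have I: "ideal ?I (Cbd X v)"
    by (rule idealI[OF ring_axioms]) (auto simp: Cbd_mult_closed[OF av])
  show ?thesis
  proof (rule maximalidealI[OF I])
    show "carrier (Cbd X v) \<noteq> ?I"
    proof
      assume "carrier (Cbd X v) = ?I"
      then have "cst X (1::'k) x0 = 0" using Cbd_cst_closed[OF av, of X 1] by blast
      then show False using x0 by (simp add: cst_def)
    qed
  next
    fix J assume J: "ideal J (Cbd X v)" "?I \<subseteq> J" "J \<subseteq> carrier (Cbd X v)"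
    show "J = ?I \<or> J = carrier (Cbd X v)"
    proof (cases "J = ?I")
      case False
      then obtain h where h: "h \<in> J" "h x0 \<noteq> 0" using J(2,3) by blast
      have "f \<in> J" if f: "f \<in> carrier (Cbd X v)" for f
      proof -
        txt \<open>\<open>f = (f - c h) + c h\<close> with \<open>c = f x0 / h x0\<close>, and \<open>f - c h\<close> vanishes at \<open>x0\<close>.\<close>
        let ?q = "cst X (f x0 / h x0) \<otimes>\<^bsub>Cbd X v\<^esub> h"
        have q: "?q \<in> J" using ideal.I_l_closed[OF J(1) h(1) Cbd_cst_closed[OF av]] .
        then have "(\<lambda>x. f x - ?q x) \<in> ?I"
          using Cbd_diff_closed[OF av f] J(3) h(2) x0 by (auto simp: cst_def)
        then have "(\<lambda>x. f x - ?q x) \<oplus>\<^bsub>Cbd X v\<^esub> ?q \<in> J"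
          using J(2) additive_subgroup.a_closed[OF ideal.axioms(1)[OF J(1)] _ q] by blast
        then show "f \<in> J" by simp
      qed
      then show ?thesis using J(3) by blast
    qed simp
  qed
qed

lemma sup_norm_eq_sup_eval_max:
  assumes av: "is_absval v" and na: "nonarchimedean v" and complete: "absval_complete v"
    and tb: "bounded_totally_bounded v" and f: "f \<in> carrier (Cbd X v)"
  shows "sup_norm X v f = sup0 ((\<lambda>m. v (eval_max X v m f)) ` {m. maximalideal m (Cbd X v)})"
proof -
  let ?E = "(\<lambda>m. v (eval_max X v m f)) ` {m. maximalideal m (Cbd X v)}"
  note proper = proper_nonarch_Cbd_maximal_idealI[OF av na complete tb]
  have E_le: "\<forall>e\<in>?E. e \<le> sup_norm X v f"
    using proper_nonarch_Cbd_maximal_ideal.absval_eval_max_le_sup_norm[OF proper f] by blast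
  have in_E: "v (f x) \<in> ?E" if x: "x \<in> topspace X" for x
  proof -
    let ?m = "{g \<in> carrier (Cbd X v). g x = 0}"
    have mx: "maximalideal ?m (Cbd X v)" by (rule maximalideal_vanishing_at[OF av x])
    have "(\<lambda>y. f y - cst X (f x) y) \<in> ?m"
      using Cbd_diff_closed[OF av f Cbd_cst_closed[OF av]] x by (simp add: cst_def)
    then have "eval_max X v ?m f = f x"
      by (rule proper_nonarch_Cbd_maximal_ideal.eval_max_eqI[OF proper[OF mx] f])
    then show ?thesis using mx by force
  qed
  show ?thesis
  proof (cases "topspace X = {}")
    case True
    then have "{m. maximalideal m (Cbd X v)} = {}"
      using Cbd_maximal_ideal.topspace_nonempty Cbd_maximal_ideal.intro[OF av] by blast
    then show ?thesis using True by (simp add: sup_norm_def sup0_def)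
  next
    case False
    then have ne: "?E \<noteq> {}" using in_E by blast
    have "bdd_above ?E" using E_le by (intro bdd_aboveI) blast
    then have "(SUP x\<in>topspace X. v (f x)) \<le> Sup ?E"
      using False in_E by (intro cSUP_least) (auto intro: cSup_upper)
    then have "sup_norm X v f \<le> Sup ?E" using False by (simp add: sup_norm_def sup0_def)
    then show ?thesis using ne E_le by (auto simp: sup0_def intro!: antisym cSup_least)
  qed
qed

section \<open>Finite fields and local fields\<close>

lemma trivial_absval_is_absval: "trivial_absval v \<Longrightarrow> is_absval v"
  by (simp add: trivial_absval_def is_absval_def)

lemma trivial_absval_nonarchimedean: "trivial_absval v \<Longrightarrow> nonarchimedean v"
  by (simp add: trivial_absval_def nonarchimedean_def)

text \<open>For the trivial absolute value Cauchy sequences are eventually constant.\<close>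
lemma trivial_absval_complete:
  assumes tr: "trivial_absval v" shows "absval_complete v"
  unfolding absval_complete_def
proof (intro allI impI)
  have vv: "v x = (if x = 0 then 0 else 1)" for x using tr unfolding trivial_absval_def by blast
  fix s :: "nat \<Rightarrow> 'a" assume "\<forall>e>0. \<exists>N. \<forall>m\<ge>N. \<forall>n\<ge>N. v (s m - s n) < e"
  then obtain N where N: "\<forall>m\<ge>N. \<forall>n\<ge>N. v (s m - s n) < 1" by (meson zero_less_one)
  have "v (s n - s N) = 0" if "n \<ge> N" for n
  proof -
    have "s n = s N" using N that by (auto simp: vv split: if_splits)
    then show ?thesis by (simp add: vv)
  qed
  then have "\<forall>e>0. \<forall>n\<ge>N. v (s n - s N) < e" by simp
  then show "\<exists>l. \<forall>e>0. \<exists>N. \<forall>n\<ge>N. v (s n - l) < e" by blast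
qed

lemma finite_bounded_totally_bounded:
  fixes v :: "'k::field \<Rightarrow> real"
  assumes "is_absval v" "finite (UNIV :: 'k set)" shows "bounded_totally_bounded v"
  unfolding bounded_totally_bounded_def
proof (intro allI impI)
  fix M r :: real assume "0 < r"
  then have "\<exists>b\<in>UNIV. v (y - b) < r" for y
    using absval_0[OF assms(1)] by (intro bexI[of _ y]) simp_all
  then have "finite (UNIV :: 'k set) \<and> (\<forall>y. v y \<le> M \<longrightarrow> (\<exists>b\<in>UNIV. v (y - b) < r))"
    using assms(2) by simp
  then show "\<exists>F. finite F \<and> (\<forall>y. v y \<le> M \<longrightarrow> (\<exists>b\<in>F. v (y - b) < r))" by blast
qed

lemma local_field_conditions:
  assumes "local_field v"
  shows "is_absval v" "nonarchimedean v" "absval_complete v"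
proof -
  note L = assms[unfolded local_field_def]
  show "is_absval v" using L by (rule conjunct1)
  show "nonarchimedean v" unfolding nonarchimedean_def using L[THEN conjunct2] by (rule conjunct1)
  show "absval_complete v"
    unfolding absval_complete_def using L[THEN conjunct2, THEN conjunct2, THEN conjunct2] by (rule conjunct1)
qed

lemma power_int_le_if_less_one:
  fixes \<rho> :: real assumes "0 < \<rho>" "\<rho> < 1" "\<rho> powi n < 1" shows "\<rho> powi n \<le> \<rho>"
proof (cases "n \<ge> 1")
  case True
  then have "\<rho> powi n = \<rho> ^ nat n" by (simp add: power_int_def)
  also have "\<dots> \<le> \<rho> ^ 1" using True assms by (intro power_decreasing) auto
  finally show ?thesis by simp
next
  case False
  then have "\<rho> powi n = inverse \<rho> ^ nat (- n)" by (simp add: power_int_def)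
  also have "\<dots> \<ge> 1" using assms by (intro one_le_power) (simp add: one_le_inverse)
  finally show ?thesis using assms by simp
qed

lemma unit_ball_finite_cover_power:
  assumes av: "is_absval v" and pi: "\<pi> \<noteq> 0" and T: "finite T"
    and cover: "\<forall>z. v z \<le> 1 \<longrightarrow> (\<exists>t\<in>T. v (z - t) \<le> v \<pi>)"
  shows "\<exists>F. finite F \<and> (\<forall>y. v y \<le> 1 \<longrightarrow> (\<exists>b\<in>F. v (y - b) \<le> v \<pi> ^ n))"
proof (induction n)
  case 0
  have "\<forall>y. v y \<le> 1 \<longrightarrow> (\<exists>b\<in>{0}. v (y - b) \<le> v \<pi> ^ 0)" by simp
  then show ?case by blast
next
  case (Suc n)
  then obtain F where F: "finite F" "\<forall>y. v y \<le> 1 \<longrightarrow> (\<exists>b\<in>F. v (y - b) \<le> v \<pi> ^ n)" by blast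
  have rho: "v \<pi> > 0" using absval_pos[OF av pi] .
  have "\<exists>b\<in>(\<lambda>(b, t). b + \<pi> ^ n * t) ` (F \<times> T). v (y - b) \<le> v \<pi> ^ Suc n" if y: "v y \<le> 1" for y
  proof -
    obtain b where b: "b \<in> F" "v (y - b) \<le> v \<pi> ^ n" using F(2) y by blast
    have vpn: "v (\<pi> ^ n) = v \<pi> ^ n" by (rule absval_power[OF av])
    define z where "z = (y - b) / \<pi> ^ n"
    have "v z = v (y - b) / v \<pi> ^ n"
      using absval_mult[OF av] absval_inverse[OF av] vpn by (simp add: z_def divide_inverse)
    also have "\<dots> \<le> 1" using b(2) rho by (simp add: divide_le_eq)
    finally obtain t where t: "t \<in> T" "v (z - t) \<le> v \<pi>" using cover by auto
    have "\<pi> ^ n * z = y - b" using pi by (simp add: z_def)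
    then have "y - (b + \<pi> ^ n * t) = \<pi> ^ n * (z - t)" by (simp add: algebra_simps)
    then have "v (y - (b + \<pi> ^ n * t)) = v \<pi> ^ n * v (z - t)" using absval_mult[OF av] vpn by simp
    also have "\<dots> \<le> v \<pi> ^ Suc n" using t(2) rho by (simp add: mult_left_mono mult.commute)
    finally have "v (y - (b + \<pi> ^ n * t)) \<le> v \<pi> ^ Suc n" .
    moreover have "b + \<pi> ^ n * t \<in> (\<lambda>(b, t). b + \<pi> ^ n * t) ` (F \<times> T)"
      using b(1) t(1) by (intro image_eqI[where x="(b, t)"]) simp_all
    ultimately show ?thesis by blast
  qed
  moreover have "finite ((\<lambda>(b, t). b + \<pi> ^ n * t) ` (F \<times> T))" using F(1) T by simp
  ultimately show ?case by blast
qed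

lemma bounded_totally_bounded_if_unit_ball_cover:
  assumes av: "is_absval v" and pi: "\<pi> \<noteq> 0" "v \<pi> < 1" and T: "finite T"
    and cover: "\<forall>z. v z \<le> 1 \<longrightarrow> (\<exists>t\<in>T. v (z - t) \<le> v \<pi>)"
  shows "bounded_totally_bounded v"
  unfolding bounded_totally_bounded_def
proof (intro allI impI)
  fix M r :: real assume r: "r > 0"
  define \<rho> where "\<rho> = v \<pi>"
  have rho: "0 < \<rho>" "\<rho> < 1" using absval_pos[OF av pi(1)] pi(2) by (auto simp: \<rho>_def)
  then have "1 < inverse \<rho>" by (simp add: one_less_inverse)
  then obtain N where N: "M < inverse \<rho> ^ N" using real_arch_pow by blast
  have rN: "\<rho> ^ N > 0" using rho by simp
  then have "r * \<rho> ^ N > 0" using r by simp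
  then obtain n where n: "\<rho> ^ n < r * \<rho> ^ N" using real_arch_pow_inv rho(2) by blast
  obtain F where F: "finite F" "\<forall>y. v y \<le> 1 \<longrightarrow> (\<exists>b\<in>F. v (y - b) \<le> \<rho> ^ n)"
    using unit_ball_finite_cover_power[OF av pi(1) T cover, of n, folded \<rho>_def] by blast
  have vpN: "v (\<pi> ^ N) = \<rho> ^ N" using absval_power[OF av] by (simp add: \<rho>_def)
  txt \<open>Scale \<open>y\<close> into the unit ball by \<open>\<pi>^N\<close>, approximate there, and scale back.\<close>
  have "\<exists>b\<in>(\<lambda>b. b / \<pi> ^ N) ` F. v (y - b) < r" if y: "v y \<le> M" for y
  proof -
    have "v (\<pi> ^ N * y) \<le> \<rho> ^ N * inverse \<rho> ^ N"
      using y N rN absval_mult[OF av] vpN by (simp add: mult_left_mono)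
    also have "\<dots> = 1" using rho by (simp add: power_inverse[symmetric] field_simps)
    finally obtain b where b: "b \<in> F" "v (\<pi> ^ N * y - b) \<le> \<rho> ^ n" using F(2) by blast
    have "y - b / \<pi> ^ N = (\<pi> ^ N * y - b) / \<pi> ^ N" using pi(1) by (simp add: field_simps)
    then have "v (y - b / \<pi> ^ N) = v (\<pi> ^ N * y - b) / \<rho> ^ N"
      using absval_mult[OF av] absval_inverse[OF av] vpN by (simp add: divide_inverse)
    also have "\<dots> \<le> \<rho> ^ n / \<rho> ^ N" using b(2) rN by (simp add: divide_right_mono)
    also have "\<dots> < r" using n rN by (simp add: divide_less_eq)
    finally show ?thesis using b(1) by blast
  qed
  then show "\<exists>F. finite F \<and> (\<forall>y. v y \<le> M \<longrightarrow> (\<exists>b\<in>F. v (y - b) < r))" using F(1) by blast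
qed

lemma local_field_bounded_totally_bounded:
  assumes lf: "local_field v" shows "bounded_totally_bounded v"
proof -
  note L = lf[unfolded local_field_def]
  note av = local_field_conditions(1)[OF lf]
  obtain \<pi> where pi: "0 < v \<pi>" "v \<pi> < 1" "\<forall>x. x \<noteq> 0 \<longrightarrow> (\<exists>n::int. v x = v \<pi> powi n)"
    using L[THEN conjunct2, THEN conjunct2, THEN conjunct1] by blast
  have pi0: "\<pi> \<noteq> 0" using pi(1) absval_0[OF av] by auto
  let ?O = "{x. v x \<le> 1}"
  let ?R = "{(x, y). v x \<le> 1 \<and> v y \<le> 1 \<and> v (x - y) < 1}"
  have disc: "v w \<le> v \<pi>" if "v w < 1" for w
  proof (cases "w = 0")
    case True then show ?thesis using absval_0[OF av] pi by simp
  next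
    case False
    then obtain n :: int where "v w = v \<pi> powi n" using pi(3) by blast
    then show ?thesis using power_int_le_if_less_one[OF pi(1,2)] that by simp
  qed
  define T where "T = (\<lambda>C. SOME t. t \<in> C) ` (?O // ?R)"
  have "finite (?O // ?R)" using L[THEN conjunct2, THEN conjunct2, THEN conjunct2, THEN conjunct2] .
  then have "finite T" by (simp add: T_def)
  moreover have "\<exists>t\<in>T. v (z - t) \<le> v \<pi>" if z: "v z \<le> 1" for z
  proof -
    have C: "?R `` {z} \<in> ?O // ?R" using z by (intro quotientI) simp
    have "z \<in> ?R `` {z}" using z absval_0[OF av] by simp
    define t where "t = (SOME t. t \<in> ?R `` {z})"
    have "t \<in> ?R `` {z}" unfolding t_def using \<open>z \<in> ?R `` {z}\<close> by (rule someI)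
    then have "v (z - t) < 1" by simp
    moreover have "t \<in> T" unfolding T_def t_def by (rule imageI[OF C])
    ultimately show ?thesis using disc by blast
  qed
  ultimately show ?thesis by (intro bounded_totally_bounded_if_unit_ball_cover[OF av pi0 pi(2)]) auto
qed

theorem mainTheorem12:
  fixes X :: "'x topology" and v :: "'k::field \<Rightarrow> real"
  assumes "(finite (UNIV :: 'k set) \<and> trivial_absval v) \<or> local_field v"
  shows "(\<forall>m. maximalideal m (Cbd X v) \<longrightarrow>
           bij_betw (\<lambda>a. m +>\<^bsub>Cbd X v\<^esub> cst X a) UNIV (carrier (Cbd X v Quot m))
         \<and> (\<forall>f\<in>carrier (Cbd X v). \<exists>!a. \<exists>g\<in>m. f = cst X a \<oplus>\<^bsub>Cbd X v\<^esub> g)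
         \<and> (\<forall>a g. g \<in> m \<longrightarrow>
              sup_norm X v (cst X a \<oplus>\<^bsub>Cbd X v\<^esub> g) = max (v a) (sup_norm X v g)))
       \<and> (\<forall>f\<in>carrier (Cbd X v). sup_norm X v f =
           sup0 ((\<lambda>m. v (eval_max X v m f)) ` {m. maximalideal m (Cbd X v)}))"
proof -
  have av: "is_absval v" and na: "nonarchimedean v" and complete: "absval_complete v"
    and tb: "bounded_totally_bounded v"
    using assms trivial_absval_is_absval trivial_absval_nonarchimedean trivial_absval_complete
      finite_bounded_totally_bounded local_field_conditions local_field_bounded_totally_bounded
    by blast+
  note proper = proper_nonarch_Cbd_maximal_idealI[OF av na complete tb]
  show ?thesis
    using proper_nonarch_Cbd_maximal_ideal.bij_betw_cst_Quot[OF proper]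
      proper_nonarch_Cbd_maximal_ideal.ex1_cst_add_mem[OF proper]
      nonarch_Cbd_maximal_ideal.sup_norm_cst_add[OF proper_nonarch_Cbd_maximal_ideal.axioms(1)[OF proper]]
      sup_norm_eq_sup_eval_max[OF av na complete tb]
    by blast
qed

end
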